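(* Consider the inexact proximal method described in the context, and assume $F'(x_i)\ne0$ for all iterates considered. Let $\varepsilon>0$ and $K\ge1$ be such that $F(x_k)-F^*\ge\varepsilon$ for $1\le k\le K$. Then for every $1\le k\le K$, $$F(\bar x_k)-F^*\le\frac{L_p\big(\|x_0-x^*\|+\sum_{i=1}^k\delta_i\big)^{p+1}}{k^{\frac{p+1}{2}}}\cdot\frac{(p+1)2^{p-2}V_k(\varepsilon)}{p!},$$ where $\bar x_k=\frac{\sum_{i=1}^ka_ix_i}{\sum_{i=1}^ka_i}$ and $V_k(\varepsilon)=\Big(\frac{\|F'(x_0)\|_*\big(\|x_0-x^*\|+\sum_{i=1}^k\delta_i\big)}{\varepsilon}\Big)^{\frac{p-1}{k}}$.
   Context: $\mathbb{E}$ is a finite-dimensional real vector space with dual $\mathbb{E}^*$; $B:\mathbb{E}\to\mathbb{E}^*$ is a fixed self-adjoint positive-definite operator, $\|x\|=\langle Bx,x\rangle^{1/2}$, $\|g\|_*=\langle g,B^{-1}g\rangle^{1/2}$. Let $p\ge 2$ be an integer, $h:\mathbb{E}\to\mathbb{R}\cup\{+\infty\}$ proper closed convex, and $f$ convex and $p$ times differentiable on an open convex set containing $\operatorname{dom}h$, with $\|D^pf(x)-D^pf(y)\|\le L_p\|x-y\|$ for $x,y\in\operatorname{dom}h$, $0<L_p<\infty$, where for a symmetric $p$-linear form $\|A\|=\max_{\|u\|\le1}|A[u]^p|$. $F=f+h$, attaining its minimum $F^*$ at $x^*\in\operatorname{dom}h$. Inexact proximal method: given $x_0\in\operatorname{dom}h$,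 a fixed subgradient $F'(x_0)\in\partial F(x_0)$, and accuracies $\delta_k\ge0$ ($k\ge1$). For $k\ge0$: set $a_{k+1}=\big(\frac{1}{2\|F'(x_k)\|_*}\big)^{\frac{p-1}{p}}\big(\frac{p!}{(p+1)L_p}\big)^{1/p}$ and $\Phi_{k+1}(x)=a_{k+1}F(x)+\frac12\|x-x_k\|^2$; find $x_{k+1}$ and $g_{k+1}\in\partial\Phi_{k+1}(x_{k+1})$ with $\|g_{k+1}\|_*\le\delta_{k+1}$, and set $F'(x_{k+1})=\frac{1}{a_{k+1}}(g_{k+1}-B(x_{k+1}-x_k))$. *)

theory Defs
  imports "HOL-Analysis.Analysis"
begin

text \<open>The space E is a euclidean_space type; E* is identified with E via the
inner product, so a linear functional g acts as x \<mapsto> g \<bullet> x.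
B : E \<rightarrow> E* is then a linear self-map of E.\<close>

definition Bnorm :: "('a::euclidean_space \<Rightarrow> 'a) \<Rightarrow> 'a \<Rightarrow> real" where
  "Bnorm B x = sqrt (B x \<bullet> x)"

definition Bdnorm :: "('a::euclidean_space \<Rightarrow> 'a) \<Rightarrow> 'a \<Rightarrow> real" where
  "Bdnorm B g = sqrt (g \<bullet> inv B g)"

definition selfadj_posdef :: "('a::euclidean_space \<Rightarrow> 'a) \<Rightarrow> bool" where
  "selfadj_posdef B \<longleftrightarrow> linear B \<and> (\<forall>x y. B x \<bullet> y = x \<bullet> B y) \<and> (\<forall>x. x \<noteq> 0 \<longrightarrow> B x \<bullet> x > 0)"

definition edom :: "('a \<Rightarrow> ereal) \<Rightarrow> 'a set" where
  "edom h = {x. h x \<noteq> \<infinity>}"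

definition proper_closed_convex :: "('a::euclidean_space \<Rightarrow> ereal) \<Rightarrow> bool" where
  "proper_closed_convex h \<longleftrightarrow>
     (\<forall>x. h x \<noteq> -\<infinity>) \<and> (\<exists>x. h x \<noteq> \<infinity>) \<and>
     (\<forall>x y t. 0 \<le> t \<and> t \<le> 1 \<longrightarrow>
        h ((1 - t) *\<^sub>R x + t *\<^sub>R y) \<le> ereal (1 - t) * h x + ereal t * h y) \<and>
     closed {(x, t::real). h x \<le> ereal t}"

definition subdiff :: "('a::euclidean_space \<Rightarrow> ereal) \<Rightarrow> 'a \<Rightarrow> 'a set" where
  "subdiff G x = {g. \<forall>y. G y \<ge> G x + ereal (g \<bullet> (y - x))}"

text \<open>f is p times (Frechet) differentiable on the open set U, with
  Df k x the k-th derivative at x, a k-linear form evaluated on a list of k vectors: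
  Df k x [u1,...,uk] = D^k f(x)[u1,...,uk].\<close>
definition has_derivs_upto ::
  "nat \<Rightarrow> ('a::real_normed_vector \<Rightarrow> real) \<Rightarrow> (nat \<Rightarrow> 'a \<Rightarrow> 'a list \<Rightarrow> real) \<Rightarrow> 'a set \<Rightarrow> bool" where
  "has_derivs_upto p f Df U \<longleftrightarrow>
     (\<forall>x\<in>U. Df 0 x [] = f x) \<and>
     (\<forall>k<p. \<forall>x\<in>U. \<forall>us. length us = k \<longrightarrow>
        ((\<lambda>y. Df k y us) has_derivative (\<lambda>v. Df (Suc k) x (v # us))) (at x))"

end

(* The inexact step makes F'(x_{k+1}) an exact subgradient of F at x_{k+1}, and
   x_{k+1} - x* + a_{k+1} B^-1 F'(x_{k+1}) = x_k - x* + B^-1 g_{k+1}.  Squaring this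
   identity and telescoping bounds both sum a_i (F(x_i) - min F) and
   sum (a_i |F'(x_i)|)^2 (dual norms) by D^2, where D = |x_0 - x*| + sum delta_i.
   The step-size rule a_i^p (2 |F'(x_(i-1))|)^(p-1) = p! / ((p+1) L) makes the product
   of the a_i telescope against the dual norms of the F'(x_i); the outer factors are
   |F'(x_0)| and |F'(x_k)| >= eps / D, so AM-GM applied to the a_i and to the
   a_i |F'(x_i)| gives a lower bound on sum a_i.  Jensen's inequality for the
   weighted mean of the iterates finishes the proof. *)

theory Submission
  imports Defs
begin

locale posdef_operator =
  fixes B :: "'a::euclidean_space \<Rightarrow> 'a"
  assumes selfadj_posdef: "selfadj_posdef B"
begin

lemma linear_B: "linear B"
  using selfadj_posdef by (simp add: selfadj_posdef_def)

lemma inner_B_commute: "B x \<bullet> y = B y \<bullet> x"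
  using selfadj_posdef unfolding selfadj_posdef_def by (metis inner_commute)

lemma inner_B_self_pos: "x \<noteq> 0 \<Longrightarrow> 0 < B x \<bullet> x"
  using selfadj_posdef unfolding selfadj_posdef_def by blast

lemma inner_B_self_nonneg: "0 \<le> B x \<bullet> x"
  using inner_B_self_pos[of x] by (cases "x = 0") (auto intro: less_imp_le)

lemma Bnorm_nonneg: "0 \<le> Bnorm B x"
  by (simp add: Bnorm_def inner_B_self_nonneg)

lemma Bnorm_power2: "Bnorm B x ^ 2 = B x \<bullet> x"
  by (simp add: Bnorm_def inner_B_self_nonneg)

lemma Bnorm_pos: "x \<noteq> 0 \<Longrightarrow> 0 < Bnorm B x"
  by (simp add: Bnorm_def inner_B_self_pos)

lemma Bnorm_scaleR: "Bnorm B (c *\<^sub>R x) = \<bar>c\<bar> * Bnorm B x"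
  using linear_B by (simp add: Bnorm_def linear_scale real_sqrt_mult power2_eq_square)

lemma Bnorm_add_power2: "Bnorm B (u + v) ^ 2 = Bnorm B u ^ 2 + 2 * (B u \<bullet> v) + Bnorm B v ^ 2"
  using linear_B inner_B_commute[of v u]
  by (simp add: Bnorm_power2 linear_add inner_add_left inner_add_right)

lemma Cauchy_Schwarz_B: "B x \<bullet> y \<le> Bnorm B x * Bnorm B y"
proof (cases "x = 0 \<or> y = 0")
  case True
  then show ?thesis using linear_B by (auto simp: linear_0 Bnorm_def)
next
  case False
  define nx ny where "nx = Bnorm B x" and "ny = Bnorm B y"
  have "nx > 0" "ny > 0" using False Bnorm_pos by (auto simp: nx_def ny_def)
  have "0 \<le> Bnorm B (ny *\<^sub>R x + (- nx) *\<^sub>R y) ^ 2" by simp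
  also have "\<dots> = 2 * (nx * ny) * (nx * ny - B x \<bullet> y)"
    unfolding Bnorm_add_power2 Bnorm_scaleR using linear_B
    by (simp add: linear_scale nx_def ny_def power2_eq_square algebra_simps)
  finally have "0 \<le> nx * ny - B x \<bullet> y"
    using mult_pos_pos[OF \<open>nx > 0\<close> \<open>ny > 0\<close>] by (auto simp: zero_le_mult_iff)
  then show ?thesis by (simp add: nx_def ny_def)
qed

lemma Bnorm_triangle: "Bnorm B (u + v) \<le> Bnorm B u + Bnorm B v"
proof (rule power2_le_imp_le)
  show "Bnorm B (u + v) ^ 2 \<le> (Bnorm B u + Bnorm B v) ^ 2"
    unfolding Bnorm_add_power2 power2_sum using Cauchy_Schwarz_B[of u v] by simp
qed (simp add: Bnorm_nonneg add_nonneg_nonneg)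

lemma bij_B: "bij B"
proof -
  have "inj B"
    using linear_B inner_B_self_pos by (force simp: linear_injective_0)
  then show ?thesis
    using linear_B linear_injective_imp_surjective by (blast intro: bijI)
qed

lemma B_inv_apply [simp]: "B (inv B g) = g"
  using bij_B by (simp add: bij_is_surj surj_f_inv_f)

lemma Bdnorm_eq_Bnorm_inv: "Bdnorm B g = Bnorm B (inv B g)"
  by (simp add: Bdnorm_def Bnorm_def inner_commute)

lemma Bdnorm_nonneg: "0 \<le> Bdnorm B g"
  by (simp add: Bdnorm_eq_Bnorm_inv Bnorm_nonneg)

lemma Bdnorm_pos: "g \<noteq> 0 \<Longrightarrow> 0 < Bdnorm B g"
  using B_inv_apply[of g] linear_B
  by (metis Bdnorm_eq_Bnorm_inv Bnorm_pos linear_0)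

lemma Cauchy_Schwarz_dual: "g \<bullet> y \<le> Bdnorm B g * Bnorm B y"
  using Cauchy_Schwarz_B[of "inv B g" y] by (simp add: Bdnorm_eq_Bnorm_inv)

end

lemma convex_on_real_of_ereal_edom:
  assumes h: "proper_closed_convex h"
  shows "convex_on (edom h) (\<lambda>y. real_of_ereal (h y))"
proof -
  have fin: "\<exists>r. h y = ereal r" if "y \<in> edom h" for y
    using that h by (cases "h y") (auto simp: edom_def proper_closed_convex_def)
  have comb: "h ((1 - t) *\<^sub>R x + t *\<^sub>R y) \<le> ereal ((1 - t) * real_of_ereal (h x) + t * real_of_ereal (h y))"
    if xy: "x \<in> edom h" "y \<in> edom h" and t: "0 \<le> t" "t \<le> 1" for x y and t :: real
  proof -
    obtain rx ry where "h x = ereal rx" "h y = ereal ry"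
      using fin xy by blast
    moreover have "h ((1 - t) *\<^sub>R x + t *\<^sub>R y) \<le> ereal (1 - t) * h x + ereal t * h y"
      using h t unfolding proper_closed_convex_def by blast
    ultimately show ?thesis
      by simp
  qed
  have mem: "(1 - t) *\<^sub>R x + t *\<^sub>R y \<in> edom h"
    if "x \<in> edom h" "y \<in> edom h" "0 \<le> t" "t \<le> 1" for x y t
    using comb[OF that] by (auto simp: edom_def)
  show ?thesis
  proof (rule convex_onI)
    fix t :: real and x y assume txy: "0 < t" "t < 1" "x \<in> edom h" "y \<in> edom h"
    then obtain r where "h ((1 - t) *\<^sub>R x + t *\<^sub>R y) = ereal r"
      using fin mem by (meson less_imp_le)
    with comb[of x y t] txy show "real_of_ereal (h ((1 - t) *\<^sub>R x + t *\<^sub>R y))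
        \<le> (1 - t) * real_of_ereal (h x) + t * real_of_ereal (h y)"
      by simp
  next
    show "convex (edom h)"
      unfolding convex_alt using mem by blast
  qed
qed

lemma ereal_add_proper_closed_convex:
  fixes h :: "'a::euclidean_space \<Rightarrow> ereal"
  assumes h: "proper_closed_convex h" and f: "convex_on U f" and U: "edom h \<subseteq> U"
  shows "convex_on (edom h) (\<lambda>y. f y + real_of_ereal (h y))"
    and "y \<in> edom h \<Longrightarrow> ereal (f y) + h y = ereal (f y + real_of_ereal (h y))"
    and "y \<notin> edom h \<Longrightarrow> ereal (f y) + h y = \<infinity>"
proof -
  show "convex_on (edom h) (\<lambda>y. f y + real_of_ereal (h y))"
    using convex_on_real_of_ereal_edom[OF h]
    by (intro convex_on_add convex_on_subset[OF f U] convex_on_imp_convex)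
  show "y \<in> edom h \<Longrightarrow> ereal (f y) + h y = ereal (f y + real_of_ereal (h y))"
    using h by (cases "h y") (auto simp: edom_def proper_closed_convex_def)
  show "y \<notin> edom h \<Longrightarrow> ereal (f y) + h y = \<infinity>"
    by (simp add: edom_def)
qed

lemma nonneg_if_nonneg_add_mult_small:
  fixes c N :: real
  assumes "\<And>t. 0 < t \<Longrightarrow> t \<le> 1 \<Longrightarrow> 0 \<le> c + t * N"
  shows "0 \<le> c"
proof -
  have "((\<lambda>t. c + t * N) \<longlongrightarrow> c + 0 * N) (at_right 0)"
    by (intro tendsto_intros)
  moreover have "eventually (\<lambda>t. 0 \<le> c + t * N) (at_right 0)"
    using eventually_at_right_real[of 0 1] by (rule eventually_mono) (auto intro: assms)
  ultimately show ?thesis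
    by (simp add: tendsto_lowerbound)
qed

context posdef_operator
begin

lemma prox_subgradient:
  fixes Fr :: "'a \<Rightarrow> real"
  assumes conv: "convex_on S Fr" and x: "x \<in> S" and y: "y \<in> S" and a: "0 < a"
    and sub: "\<And>w. w \<in> S \<Longrightarrow>
      a * Fr x + Bnorm B (x - z) ^ 2 / 2 + g \<bullet> (w - x) \<le> a * Fr w + Bnorm B (w - z) ^ 2 / 2"
  shows "Fr x + ((1 / a) *\<^sub>R (g - B (x - z))) \<bullet> (y - x) \<le> Fr y"
proof -
  define d where "d = y - x"
  define \<Delta> where "\<Delta> = a * (Fr y - Fr x) + B (x - z) \<bullet> d - g \<bullet> d"
  have "0 \<le> \<Delta> + t * (Bnorm B d ^ 2 / 2)" if t: "0 < t" "t \<le> 1" for t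
  proof -
    define w where "w = (1 - t) *\<^sub>R x + t *\<^sub>R y"
    have w: "w \<in> S" "w - x = t *\<^sub>R d" "w - z = (x - z) + t *\<^sub>R d"
      using convexD[OF convex_on_imp_convex[OF conv] x y, of "1 - t" t] t
      by (auto simp: w_def d_def algebra_simps)
    have "t * (g \<bullet> d) \<le> a * (Fr w - Fr x) + (Bnorm B (w - z) ^ 2 - Bnorm B (x - z) ^ 2) / 2"
      using sub[OF w(1)] by (simp add: w(2) right_diff_distrib diff_divide_distrib)
    also have "\<dots> \<le> a * (t * (Fr y - Fr x)) + (t * (B (x - z) \<bullet> d) + t * (t * (Bnorm B d ^ 2 / 2)))"
    proof (rule add_mono)
      have "Fr w - Fr x \<le> t * (Fr y - Fr x)"
        using convex_onD[OF conv, of t x y] t x y by (simp add: w_def algebra_simps)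
      then show "a * (Fr w - Fr x) \<le> a * (t * (Fr y - Fr x))"
        using a by (simp add: mult_left_mono)
      show "(Bnorm B (w - z) ^ 2 - Bnorm B (x - z) ^ 2) / 2
          \<le> t * (B (x - z) \<bullet> d) + t * (t * (Bnorm B d ^ 2 / 2))"
        unfolding w(3) Bnorm_add_power2 using t by (simp add: Bnorm_scaleR power2_eq_square)
    qed
    finally have "0 \<le> t * (\<Delta> + t * (Bnorm B d ^ 2 / 2))"
      by (simp add: \<Delta>_def algebra_simps)
    then show ?thesis using t by (simp add: zero_le_mult_iff)
  qed
  then have "0 \<le> \<Delta>"
    by (rule nonneg_if_nonneg_add_mult_small)
  then show ?thesis
    using a by (simp add: \<Delta>_def d_def inner_diff_left field_simps)
qed

lemma prox_step_subgradient:
  fixes F :: "'a \<Rightarrow> ereal" and Fr :: "'a \<Rightarrow> real"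
  assumes conv: "convex_on S Fr" and y: "y \<in> S"
    and F_in: "\<And>w. w \<in> S \<Longrightarrow> F w = ereal (Fr w)" and F_out: "\<And>w. w \<notin> S \<Longrightarrow> F w = \<infinity>"
    and a: "0 < a"
    and g: "g \<in> subdiff (\<lambda>w. ereal a * F w + ereal (Bnorm B (w - z) ^ 2 / 2)) x"
  shows "x \<in> S" and "Fr x + ((1 / a) *\<^sub>R (g - B (x - z))) \<bullet> (y - x) \<le> Fr y"
proof -
  have sub: "ereal a * F x + ereal (Bnorm B (x - z) ^ 2 / 2) + ereal (g \<bullet> (w - x))
      \<le> ereal a * F w + ereal (Bnorm B (w - z) ^ 2 / 2)" for w
    using g by (simp add: subdiff_def)
  show "x \<in> S"
  proof (rule ccontr)
    assume "x \<notin> S"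
    then show False
      using sub[of y] F_out[of x] F_in[OF y] a by simp
  qed
  have "a * Fr x + Bnorm B (x - z) ^ 2 / 2 + g \<bullet> (w - x) \<le> a * Fr w + Bnorm B (w - z) ^ 2 / 2"
    if "w \<in> S" for w
    using sub[of w] F_in[OF that] F_in[OF \<open>x \<in> S\<close>] by simp
  then show "Fr x + ((1 / a) *\<^sub>R (g - B (x - z))) \<bullet> (y - x) \<le> Fr y"
    by (rule prox_subgradient[OF conv \<open>x \<in> S\<close> y a])
qed

lemma prox_step_distance:
  assumes a: "0 < a" and Fp: "Fp = (1 / a) *\<^sub>R (g - B (x - z))"
  shows "Bnorm B (x - y) ^ 2 + 2 * a * (Fp \<bullet> (x - y)) + (a * Bdnorm B Fp) ^ 2
    \<le> (Bnorm B (z - y) + Bdnorm B g) ^ 2"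
proof -
  have "B (a *\<^sub>R inv B Fp) = B (inv B g - (x - z))"
    using a linear_B by (simp add: Fp linear_scale linear_diff)
  then have step: "(x - y) + a *\<^sub>R inv B Fp = inv B g + (z - y)"
    using bij_B by (simp add: bij_is_inj inj_eq)
  have "Bnorm B (x - y) ^ 2 + 2 * a * (Fp \<bullet> (x - y)) + (a * Bdnorm B Fp) ^ 2
      = Bnorm B ((x - y) + a *\<^sub>R inv B Fp) ^ 2"
    unfolding Bnorm_add_power2 inner_B_commute[of "x - y"] using a linear_B
    by (simp add: linear_scale Bnorm_scaleR Bdnorm_eq_Bnorm_inv)
  also have "\<dots> \<le> (Bdnorm B g + Bnorm B (z - y)) ^ 2"
    unfolding step Bdnorm_eq_Bnorm_inv
    by (rule power_mono[OF Bnorm_triangle]) (simp add: Bnorm_nonneg)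
  finally show ?thesis
    by (simp add: add.commute)
qed

end

lemma forall_Suc_lessD:
  assumes "\<And>i. i < k \<Longrightarrow> P (Suc i)" and "i \<in> {1..k}"
  shows "P i"
  using assms by (cases i) auto

lemma sum_square_telescope:
  fixes c r \<delta> :: "nat \<Rightarrow> real"
  assumes "0 \<le> r 0"
    and "\<forall>i<k. 0 \<le> c (Suc i) \<and> 0 \<le> \<delta> (Suc i) \<and> c (Suc i) + r (Suc i) ^ 2 \<le> (r i + \<delta> (Suc i)) ^ 2"
  shows "(\<Sum>i=1..k. c i) + r k ^ 2 \<le> (r 0 + (\<Sum>i=1..k. \<delta> i)) ^ 2"
  using assms(2)
proof (induction k)
  case 0
  then show ?case by simp
next
  case (Suc k)
  define D where "D = r 0 + (\<Sum>i=1..k. \<delta> i)"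
  have "\<forall>i<k. 0 \<le> c (Suc i) \<and> 0 \<le> \<delta> (Suc i) \<and> c (Suc i) + r (Suc i) ^ 2 \<le> (r i + \<delta> (Suc i)) ^ 2"
    using Suc.prems by simp
  then have IH: "(\<Sum>i=1..k. c i) + r k ^ 2 \<le> D ^ 2"
    unfolding D_def by (rule Suc.IH)
  have step: "0 \<le> \<delta> (Suc k)" "c (Suc k) + r (Suc k) ^ 2 \<le> (r k + \<delta> (Suc k)) ^ 2"
    using Suc.prems by auto
  have nonneg: "0 \<le> c i" "0 \<le> \<delta> i" if "i \<in> {1..k}" for i
    using Suc.prems[rule_format, of "i - 1"] that by auto
  have "0 \<le> (\<Sum>i=1..k. c i)"
    using nonneg(1) by (rule sum_nonneg)
  then have "r k ^ 2 \<le> D ^ 2"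
    using IH by linarith
  moreover have "0 \<le> (\<Sum>i=1..k. \<delta> i)"
    using nonneg(2) by (rule sum_nonneg)
  then have "0 \<le> D"
    unfolding D_def using assms(1) by linarith
  ultimately have "r k \<le> D"
    by (rule power2_le_imp_le)
  have "(\<Sum>i=1..Suc k. c i) + r (Suc k) ^ 2 \<le> (\<Sum>i=1..k. c i) + (r k + \<delta> (Suc k)) ^ 2"
    using step(2) by simp
  also have "\<dots> = ((\<Sum>i=1..k. c i) + r k ^ 2) + 2 * (r k * \<delta> (Suc k)) + \<delta> (Suc k) ^ 2"
    by (simp add: power2_sum)
  also have "\<dots> \<le> D ^ 2 + 2 * (D * \<delta> (Suc k)) + \<delta> (Suc k) ^ 2"
    using IH mult_right_mono[OF \<open>r k \<le> D\<close> step(1)] by simp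
  also have "\<dots> = (r 0 + (\<Sum>i=1..Suc k. \<delta> i)) ^ 2"
    by (simp add: D_def power2_sum algebra_simps)
  finally show ?case .
qed

lemma convex_on_weighted_mean:
  fixes w :: "'i \<Rightarrow> real" and y :: "'i \<Rightarrow> 'a::real_vector"
  assumes conv: "convex_on S f" and I: "finite I" "I \<noteq> {}"
    and w: "\<And>i. i \<in> I \<Longrightarrow> 0 < w i" and y: "\<And>i. i \<in> I \<Longrightarrow> y i \<in> S"
  shows "(1 / sum w I) *\<^sub>R (\<Sum>i\<in>I. w i *\<^sub>R y i) \<in> S"
    and "f ((1 / sum w I) *\<^sub>R (\<Sum>i\<in>I. w i *\<^sub>R y i)) \<le> (\<Sum>i\<in>I. w i * f (y i)) / sum w I"
proof -
  have "0 < sum w I"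
    using I w by (intro sum_pos) auto
  then have weights: "(\<Sum>i\<in>I. w i / sum w I) = 1" "\<And>i. i \<in> I \<Longrightarrow> 0 \<le> w i / sum w I"
    using w by (auto simp: sum_divide_distrib[symmetric] less_imp_le)
  have mean: "(1 / sum w I) *\<^sub>R (\<Sum>i\<in>I. w i *\<^sub>R y i) = (\<Sum>i\<in>I. (w i / sum w I) *\<^sub>R y i)"
    by (simp add: scaleR_sum_right)
  show "(1 / sum w I) *\<^sub>R (\<Sum>i\<in>I. w i *\<^sub>R y i) \<in> S"
    unfolding mean by (rule convex_sum[OF I(1) convex_on_imp_convex[OF conv] weights y])
  have "f (\<Sum>i\<in>I. (w i / sum w I) *\<^sub>R y i) \<le> (\<Sum>i\<in>I. (w i / sum w I) * f (y i))"
    using weights y by (intro convex_on_sum[OF I conv])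
  then show "f ((1 / sum w I) *\<^sub>R (\<Sum>i\<in>I. w i *\<^sub>R y i)) \<le> (\<Sum>i\<in>I. w i * f (y i)) / sum w I"
    by (simp add: mean sum_divide_distrib)
qed

lemma prod_le_mean_power:
  fixes y :: "'i \<Rightarrow> real"
  assumes I: "finite I" "I \<noteq> {}" and y: "\<And>i. i \<in> I \<Longrightarrow> 0 \<le> y i"
  shows "(\<Prod>i\<in>I. y i) \<le> (sum y I / card I) ^ card I"
proof -
  have n: "0 < card I"
    using I by (simp add: card_gt_0_iff)
  have P: "0 \<le> (\<Prod>i\<in>I. y i)"
    using y by (simp add: prod_nonneg)
  have "(\<Prod>i\<in>I. y i) powr (1 / card I) \<le> sum y I / card I"
    using arith_geom_mean[OF I y] by (simp add: sum_divide_distrib)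
  then have "((\<Prod>i\<in>I. y i) powr (1 / card I)) ^ card I \<le> (sum y I / card I) ^ card I"
    by (rule power_mono) simp
  moreover have "((\<Prod>i\<in>I. y i) powr (1 / card I)) ^ card I = (\<Prod>i\<in>I. y i)"
    using P n by (cases "(\<Prod>i\<in>I. y i) = 0") (simp_all add: powr_power)
  ultimately show ?thesis
    by simp
qed

lemma prod_le_root_mean_square_power:
  fixes u :: "'i \<Rightarrow> real"
  assumes I: "finite I" "I \<noteq> {}"
  shows "(\<Prod>i\<in>I. u i) \<le> sqrt ((\<Sum>i\<in>I. u i ^ 2) / card I) ^ card I"
proof (rule power2_le_imp_le)
  have "(\<Prod>i\<in>I. u i) ^ 2 = (\<Prod>i\<in>I. u i ^ 2)"
    by (simp add: prod_power_distrib)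
  also have "\<dots> \<le> ((\<Sum>i\<in>I. u i ^ 2) / card I) ^ card I"
    using I by (rule prod_le_mean_power) simp
  also have "\<dots> = (sqrt ((\<Sum>i\<in>I. u i ^ 2) / card I) ^ 2) ^ card I"
    by (simp add: sum_nonneg)
  also have "\<dots> = (sqrt ((\<Sum>i\<in>I. u i ^ 2) / card I) ^ card I) ^ 2"
    by (simp only: mult.commute flip: power_mult)
  finally show "(\<Prod>i\<in>I. u i) ^ 2 \<le> (sqrt ((\<Sum>i\<in>I. u i ^ 2) / card I) ^ card I) ^ 2" .
qed (simp add: sum_nonneg)

lemma prod_shift_last:
  fixes G :: "nat \<Rightarrow> 'a::comm_monoid_mult"
  shows "(\<Prod>i=1..k. G (i - 1)) * G k = G 0 * (\<Prod>i=1..k. G i)"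
  by (induction k) (simp_all add: mult_ac)

lemma step_size_power:
  fixes c \<beta> :: real and p :: nat
  assumes "0 < c" "0 < \<beta>" "1 \<le> p"
  shows "((1 / c) powr (real (p - 1) / real p) * \<beta> powr (1 / real p)) ^ p * c ^ (p - 1) = \<beta>"
proof -
  have "((1 / c) powr (real (p - 1) / real p)) ^ p = (1 / c) ^ (p - 1)"
    using assms by (simp add: powr_powr of_nat_diff flip: powr_realpow)
  moreover have "(\<beta> powr (1 / real p)) ^ p = \<beta>"
    using assms by (simp add: powr_power)
  ultimately show ?thesis
    using assms by (simp add: power_mult_distrib power_one_over)
qed

lemma prod_step_sizes_identity:
  fixes a G :: "nat \<Rightarrow> real"
  assumes a: "\<And>i. i < k \<Longrightarrow> a (Suc i) ^ Suc n * (2 * G i) ^ n = \<beta>"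
  shows "(\<Prod>i=1..k. a i) * (2 ^ k * G 0) ^ n * ((\<Prod>i=1..k. a i) * (\<Prod>i=1..k. G i)) ^ n
    = \<beta> ^ k * G k ^ n"
proof -
  define PA PG where "PA = (\<Prod>i=1..k. a i)" and "PG = (\<Prod>i=1..k. G i)"
  have "PA * PA ^ n * (2 ^ k * (\<Prod>i=1..k. G (i - 1))) ^ n
      = (\<Prod>i=1..k. a i ^ Suc n * (2 * G (i - 1)) ^ n)"
    by (simp add: PA_def prod.distrib prod_power_distrib power_mult_distrib mult.commute flip: power_mult)
  also have "\<dots> = (\<Prod>i=1..k. \<beta>)"
  proof (rule prod.cong[OF refl])
    fix i assume "i \<in> {1..k}"
    then obtain j where "i = Suc j" "j < k"
      by (cases i) auto
    then show "a i ^ Suc n * (2 * G (i - 1)) ^ n = \<beta>"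
      using a by simp
  qed
  also have "\<dots> = \<beta> ^ k"
    by simp
  finally have "PA * PA ^ n * (2 ^ k * ((\<Prod>i=1..k. G (i - 1)) * G k)) ^ n = \<beta> ^ k * G k ^ n"
    by (simp add: power_mult_distrib mult.assoc)
  then have "PA * PA ^ n * (2 ^ k * (G 0 * PG)) ^ n = \<beta> ^ k * G k ^ n"
    unfolding prod_shift_last PG_def .
  then have "PA * (2 ^ k * G 0) ^ n * (PA * PG) ^ n = \<beta> ^ k * G k ^ n"
    by (simp add: power_mult_distrib mult_ac)
  then show ?thesis
    by (simp only: PA_def PG_def)
qed

lemma prod_step_sizes_lower_bound:
  fixes a G :: "nat \<Rightarrow> real" and p k :: nat
  assumes k: "1 \<le> k" and p: "1 \<le> p" and \<beta>: "0 < \<beta>" and \<epsilon>: "0 < \<epsilon>" and D: "0 < D"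
    and a: "\<And>i. i < k \<Longrightarrow> 0 < a (Suc i) \<and> a (Suc i) ^ p * (2 * G i) ^ (p - 1) = \<beta>"
    and G: "\<And>i. i \<le> k \<Longrightarrow> 0 < G i"
    and sq: "(\<Sum>i=1..k. (a i * G i) ^ 2) \<le> D ^ 2"
    and Gk: "\<epsilon> \<le> G k * D"
  shows "\<beta> ^ k * (\<epsilon> / D) ^ (p - 1) \<le> (\<Prod>i=1..k. a i) * (2 ^ k * G 0 * (D / sqrt k) ^ k) ^ (p - 1)"
proof -
  obtain n where n: "p = Suc n"
    using p by (cases p) auto
  define PA where "PA = (\<Prod>i=1..k. a i)"
  have a_pos: "0 < a i" if "i \<in> {1..k}" for i
    using a[of "i - 1"] that by auto
  have "PA * (\<Prod>i=1..k. G i) = (\<Prod>i=1..k. a i * G i)"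
    by (simp add: PA_def prod.distrib)
  also have "\<dots> \<le> sqrt ((\<Sum>i=1..k. (a i * G i) ^ 2) / k) ^ k"
    using prod_le_root_mean_square_power[of "{1..k}" "\<lambda>i. a i * G i"] k by simp
  also have "\<dots> \<le> (D / sqrt k) ^ k"
  proof (rule power_mono)
    have "sqrt (\<Sum>i=1..k. (a i * G i) ^ 2) \<le> D"
      using real_sqrt_le_mono[OF sq] D by simp
    then show "sqrt ((\<Sum>i=1..k. (a i * G i) ^ 2) / k) \<le> D / sqrt k"
      by (simp add: real_sqrt_divide divide_right_mono)
  qed (simp add: sum_nonneg)
  finally have PAG: "PA * (\<Prod>i=1..k. G i) \<le> (D / sqrt k) ^ k" .
  have PA: "0 < PA" and PG: "0 < (\<Prod>i=1..k. G i)"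
    using a_pos G by (auto simp: PA_def intro!: prod_pos)
  have "\<beta> ^ k * G k ^ n = PA * (2 ^ k * G 0) ^ n * (PA * (\<Prod>i=1..k. G i)) ^ n"
    unfolding PA_def by (rule prod_step_sizes_identity[symmetric]) (use a n in auto)
  also have "\<dots> \<le> PA * (2 ^ k * G 0) ^ n * ((D / sqrt k) ^ k) ^ n"
    using PA PG G[of 0] PAG by (intro mult_left_mono power_mono) simp_all
  finally have bound_Gk: "\<beta> ^ k * G k ^ n \<le> PA * (2 ^ k * G 0) ^ n * ((D / sqrt k) ^ k) ^ n" .
  have "\<beta> ^ k * (\<epsilon> / D) ^ n \<le> \<beta> ^ k * G k ^ n"
    using Gk \<epsilon> D \<beta> by (intro mult_left_mono power_mono) (simp_all add: divide_le_eq)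
  then have "\<beta> ^ k * (\<epsilon> / D) ^ n \<le> PA * (2 ^ k * G 0) ^ n * ((D / sqrt k) ^ k) ^ n"
    using bound_Gk by (rule order_trans)
  then show ?thesis
    by (simp add: n PA_def power_mult_distrib)
qed

lemma sum_step_sizes_lower_bound:
  fixes a G :: "nat \<Rightarrow> real" and p k :: nat
  assumes k: "1 \<le> k" and p: "1 \<le> p" and \<beta>: "0 < \<beta>" and \<epsilon>: "0 < \<epsilon>" and D: "0 < D"
    and a: "\<And>i. i < k \<Longrightarrow> 0 < a (Suc i) \<and> a (Suc i) ^ p * (2 * G i) ^ (p - 1) = \<beta>"
    and G: "\<And>i. i \<le> k \<Longrightarrow> 0 < G i"
    and sq: "(\<Sum>i=1..k. (a i * G i) ^ 2) \<le> D ^ 2"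
    and Gk: "\<epsilon> \<le> G k * D"
  shows "\<beta> * real k powr ((real p + 1) / 2)
      / (2 ^ (p - 1) * D ^ (p - 1) * (G 0 * D / \<epsilon>) powr (real (p - 1) / real k))
    \<le> (\<Sum>i=1..k. a i)"
proof -
  define V where "V = (G 0 * D / \<epsilon>) powr (real (p - 1) / real k)"
  define M where "M = \<beta> * sqrt k ^ (p - 1) / (2 ^ (p - 1) * D ^ (p - 1) * V)"
  have apos: "0 < a i" if "i \<in> {1..k}" for i
    using a[of "i - 1"] that by auto
  have V: "0 < V" "V ^ k = (G 0 * D / \<epsilon>) ^ (p - 1)"
    using G[of 0] \<epsilon> D k by (simp_all add: V_def powr_powr flip: powr_realpow)
  have "M ^ k = \<beta> ^ k * (\<epsilon> / D) ^ (p - 1) / (2 ^ k * G 0 * (D / sqrt k) ^ k) ^ (p - 1)"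
    using G[of 0] \<epsilon> D k
    by (simp add: M_def V(2) power_divide power_mult_distrib field_simps mult.commute flip: power_mult)
  also have "\<dots> \<le> (\<Prod>i=1..k. a i)"
    using prod_step_sizes_lower_bound[OF assms] G[of 0] D k by (simp add: divide_le_eq)
  also have "\<dots> \<le> (sum a {1..k} / card {1..k}) ^ card {1..k}"
    using k apos by (intro prod_le_mean_power) (auto intro: less_imp_le)
  finally have Mk: "M ^ k \<le> ((\<Sum>i=1..k. a i) / k) ^ k"
    by simp
  have "M \<le> (\<Sum>i=1..k. a i) / k"
  proof (rule power_le_imp_le_base[where n = "k - 1"])
    show "M ^ Suc (k - 1) \<le> ((\<Sum>i=1..k. a i) / k) ^ Suc (k - 1)"
      using Mk k by simp
    have "0 \<le> (\<Sum>i=1..k. a i)"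
      by (rule sum_nonneg) (simp add: apos less_imp_le)
    then show "0 \<le> (\<Sum>i=1..k. a i) / k"
      by simp
  qed
  then have "M * real k \<le> (\<Sum>i=1..k. a i)"
    using k by (simp add: pos_le_divide_eq)
  moreover have "real k * sqrt k ^ (p - 1) = real k powr (1 + real (p - 1) / 2)"
    using k by (simp add: powr_add powr_power flip: powr_half_sqrt)
  moreover have "1 + real (p - 1) / 2 = (real p + 1) / 2"
    using p by (simp add: of_nat_diff field_simps)
  ultimately show ?thesis
    using V(1) D by (simp add: M_def V_def field_simps)
qed

context posdef_operator
begin

lemma inexact_prox_distance_telescope:
  fixes x Fp g :: "nat \<Rightarrow> 'a" and xs :: 'a and a \<delta> \<phi> :: "nat \<Rightarrow> real"
  assumes a: "\<And>i. i < k \<Longrightarrow> 0 < a (Suc i)"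
    and Fp: "\<And>i. i < k \<Longrightarrow> Fp (Suc i) = (1 / a (Suc i)) *\<^sub>R (g (Suc i) - B (x (Suc i) - x i))"
    and g: "\<And>i. i < k \<Longrightarrow> Bdnorm B (g (Suc i)) \<le> \<delta> (Suc i)"
    and \<phi>: "\<And>i. i < k \<Longrightarrow> 0 \<le> \<phi> (Suc i) \<and> \<phi> (Suc i) \<le> Fp (Suc i) \<bullet> (x (Suc i) - xs)"
  shows "(\<Sum>i=1..k. 2 * a i * \<phi> i + (a i * Bdnorm B (Fp i)) ^ 2) + Bnorm B (x k - xs) ^ 2
    \<le> (Bnorm B (x 0 - xs) + (\<Sum>i=1..k. \<delta> i)) ^ 2"
proof (rule sum_square_telescope[OF Bnorm_nonneg], intro allI impI conjI)
  fix i assume i: "i < k"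
  show "0 \<le> \<delta> (Suc i)"
    using g[OF i] Bdnorm_nonneg order_trans by blast
  show "0 \<le> 2 * a (Suc i) * \<phi> (Suc i) + (a (Suc i) * Bdnorm B (Fp (Suc i))) ^ 2"
    using a[OF i] \<phi>[OF i] by simp
  have "2 * a (Suc i) * \<phi> (Suc i) \<le> 2 * a (Suc i) * (Fp (Suc i) \<bullet> (x (Suc i) - xs))"
    using a[OF i] \<phi>[OF i] by simp
  moreover have "(Bnorm B (x i - xs) + Bdnorm B (g (Suc i))) ^ 2 \<le> (Bnorm B (x i - xs) + \<delta> (Suc i)) ^ 2"
    using g[OF i] by (intro power_mono add_left_mono) (simp_all add: Bnorm_nonneg Bdnorm_nonneg)
  ultimately show "2 * a (Suc i) * \<phi> (Suc i) + (a (Suc i) * Bdnorm B (Fp (Suc i))) ^ 2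
      + Bnorm B (x (Suc i) - xs) ^ 2 \<le> (Bnorm B (x i - xs) + \<delta> (Suc i)) ^ 2"
    using prox_step_distance[OF a[OF i] Fp[OF i], of xs] by linarith
qed

lemma inexact_prox_sum_bounds:
  fixes x Fp g :: "nat \<Rightarrow> 'a" and xs :: 'a and a \<delta> \<phi> :: "nat \<Rightarrow> real" and k :: nat
  defines "D \<equiv> Bnorm B (x 0 - xs) + (\<Sum>i=1..k. \<delta> i)"
  assumes a: "\<And>i. i < k \<Longrightarrow> 0 < a (Suc i)"
    and Fp: "\<And>i. i < k \<Longrightarrow> Fp (Suc i) = (1 / a (Suc i)) *\<^sub>R (g (Suc i) - B (x (Suc i) - x i))"
    and g: "\<And>i. i < k \<Longrightarrow> Bdnorm B (g (Suc i)) \<le> \<delta> (Suc i)"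
    and \<phi>: "\<And>i. i < k \<Longrightarrow> 0 \<le> \<phi> (Suc i) \<and> \<phi> (Suc i) \<le> Fp (Suc i) \<bullet> (x (Suc i) - xs)"
  shows "(\<Sum>i=1..k. a i * \<phi> i) \<le> D ^ 2 / 2"
    and "(\<Sum>i=1..k. (a i * Bdnorm B (Fp i)) ^ 2) \<le> D ^ 2"
    and "Bnorm B (x k - xs) \<le> D"
proof -
  have "2 * (\<Sum>i=1..k. a i * \<phi> i) + (\<Sum>i=1..k. (a i * Bdnorm B (Fp i)) ^ 2) + Bnorm B (x k - xs) ^ 2
      \<le> D ^ 2"
    using inexact_prox_distance_telescope[where x = x and xs = xs and \<phi> = \<phi> and \<delta> = \<delta> and k = k,
        OF a Fp g \<phi>]
    by (simp add: D_def sum.distrib sum_distrib_left mult.assoc)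
  moreover have "0 \<le> (\<Sum>i=1..k. a i * \<phi> i)"
  proof (rule sum_nonneg)
    have "0 \<le> a (Suc j) * \<phi> (Suc j)" if "j < k" for j
      using a[OF that] \<phi>[OF that] by simp
    then show "0 \<le> a i * \<phi> i" if "i \<in> {1..k}" for i
      using that by (rule forall_Suc_lessD[where P = "\<lambda>i. 0 \<le> a i * \<phi> i"])
  qed
  moreover have "0 \<le> (\<Sum>i=1..k. (a i * Bdnorm B (Fp i)) ^ 2)"
    by (simp add: sum_nonneg)
  ultimately have "(\<Sum>i=1..k. a i * \<phi> i) \<le> D ^ 2 / 2"
    and "(\<Sum>i=1..k. (a i * Bdnorm B (Fp i)) ^ 2) \<le> D ^ 2"
    and dist: "Bnorm B (x k - xs) ^ 2 \<le> D ^ 2"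
    using zero_le_power2[of "Bnorm B (x k - xs)"] by linarith+
  then show "(\<Sum>i=1..k. a i * \<phi> i) \<le> D ^ 2 / 2"
    and "(\<Sum>i=1..k. (a i * Bdnorm B (Fp i)) ^ 2) \<le> D ^ 2"
    by simp_all
  have "0 \<le> (\<Sum>i=1..k. \<delta> i)"
  proof (rule sum_nonneg)
    have "0 \<le> \<delta> (Suc j)" if "j < k" for j
      using Bdnorm_nonneg g[OF that] by (rule order_trans)
    then show "0 \<le> \<delta> i" if "i \<in> {1..k}" for i
      using that by (rule forall_Suc_lessD[where P = "\<lambda>i. 0 \<le> \<delta> i"])
  qed
  then have "0 \<le> D"
    unfolding D_def using Bnorm_nonneg[of "x 0 - xs"] by linarith
  then show "Bnorm B (x k - xs) \<le> D"
    by (rule power2_le_imp_le[OF dist])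
qed

lemma inexact_prox_weighted_gap_bound:
  fixes x Fp g :: "nat \<Rightarrow> 'a" and xs :: 'a and a \<delta> \<phi> :: "nat \<Rightarrow> real" and p k :: nat
  defines "D \<equiv> Bnorm B (x 0 - xs) + (\<Sum>i=1..k. \<delta> i)"
  assumes k: "1 \<le> k" and p: "2 \<le> p" and \<beta>: "0 < \<beta>" and \<epsilon>: "0 < \<epsilon>" and Fp0: "Fp 0 \<noteq> 0"
    and a: "\<And>i. i < k \<Longrightarrow> 0 < a (Suc i) \<and> a (Suc i) ^ p * (2 * Bdnorm B (Fp i)) ^ (p - 1) = \<beta>"
    and Fp: "\<And>i. i < k \<Longrightarrow> Fp (Suc i) = (1 / a (Suc i)) *\<^sub>R (g (Suc i) - B (x (Suc i) - x i))"
    and g: "\<And>i. i < k \<Longrightarrow> Bdnorm B (g (Suc i)) \<le> \<delta> (Suc i)"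
    and \<phi>: "\<And>i. i < k \<Longrightarrow> \<epsilon> \<le> \<phi> (Suc i) \<and> \<phi> (Suc i) \<le> Fp (Suc i) \<bullet> (x (Suc i) - xs)"
  shows "(\<Sum>i=1..k. a i * \<phi> i) / (\<Sum>i=1..k. a i)
    \<le> 2 ^ (p - 2) * D ^ (p + 1) * (Bdnorm B (Fp 0) * D / \<epsilon>) powr (real (p - 1) / real k)
       / (\<beta> * real k powr ((real p + 1) / 2))"
proof -
  define G where "G i = Bdnorm B (Fp i)" for i
  define LB where "LB = \<beta> * real k powr ((real p + 1) / 2)
      / (2 ^ (p - 1) * D ^ (p - 1) * (G 0 * D / \<epsilon>) powr (real (p - 1) / real k))"
  have "\<And>i. i < k \<Longrightarrow> 0 \<le> \<phi> (Suc i) \<and> \<phi> (Suc i) \<le> Fp (Suc i) \<bullet> (x (Suc i) - xs)"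
    using \<phi> \<epsilon> by force
  note bounds = inexact_prox_sum_bounds[where x = x and xs = xs and \<phi> = \<phi> and \<delta> = \<delta> and k = k,
      OF conjunct1[OF a] Fp g this, folded D_def]
  have gap_le: "\<epsilon> \<le> G i * Bnorm B (x i - xs)" if "i \<in> {1..k}" for i
    using forall_Suc_lessD[where P = "\<lambda>i. \<epsilon> \<le> \<phi> i \<and> \<phi> i \<le> Fp i \<bullet> (x i - xs)" and k = k, OF \<phi> that]
      Cauchy_Schwarz_dual[of "Fp i" "x i - xs"] by (simp add: G_def)
  have "G k * Bnorm B (x k - xs) \<le> G k * D"
    using bounds(3) Bdnorm_nonneg[of "Fp k"] by (simp add: G_def mult_left_mono)
  then have Gk: "\<epsilon> \<le> G k * D"
    using gap_le[of k] k by simp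
  have "0 \<le> D"
    using bounds(3) Bnorm_nonneg order_trans by blast
  then have D: "0 < D"
    using Gk \<epsilon> by (cases "D = 0") simp_all
  have G: "0 < G i" if "i \<le> k" for i
  proof (cases "i = 0")
    case True
    then show ?thesis using Fp0 by (simp add: G_def Bdnorm_pos)
  next
    case False
    then have "\<epsilon> \<le> G i * Bnorm B (x i - xs)"
      using gap_le that by simp
    then show ?thesis
      using \<epsilon> Bdnorm_nonneg[of "Fp i"] by (cases "G i = 0") (simp_all add: G_def)
  qed
  have "0 < LB"
    using \<beta> D G[of 0] \<epsilon> k by (simp add: LB_def)
  moreover have "LB \<le> (\<Sum>i=1..k. a i)"
    unfolding LB_def using p a
    by (intro sum_step_sizes_lower_bound[OF k _ \<beta> \<epsilon> D _ G bounds(2)[folded G_def] Gk]) (auto simp: G_def)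
  moreover have "0 \<le> (\<Sum>i=1..k. a i * \<phi> i)"
  proof (rule sum_nonneg)
    fix i assume "i \<in> {1..k}"
    then show "0 \<le> a i * \<phi> i"
      by (rule forall_Suc_lessD[where P = "\<lambda>i. 0 \<le> a i * \<phi> i", rotated])
        (use a \<phi> \<epsilon> in \<open>force intro: mult_nonneg_nonneg\<close>)
  qed
  ultimately have "(\<Sum>i=1..k. a i * \<phi> i) / (\<Sum>i=1..k. a i) \<le> (D ^ 2 / 2) / LB"
    using bounds(1) by (intro frac_le) auto
  also have "\<dots> = 2 ^ (p - 2) * D ^ (p + 1) * (G 0 * D / \<epsilon>) powr (real (p - 1) / real k)
       / (\<beta> * real k powr ((real p + 1) / 2))"
  proof -
    have "(2::real) ^ (p - 1) = 2 * 2 ^ (p - 2)" "D ^ (p + 1) = D ^ 2 * D ^ (p - 1)"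
      using p by (simp_all flip: power_Suc power_add)
    then show ?thesis
      using \<beta> D by (simp add: LB_def field_simps)
  qed
  finally show ?thesis
    by (simp add: G_def)
qed

lemma inexact_prox_rate:
  fixes Fr :: "'a \<Rightarrow> real" and x Fp g :: "nat \<Rightarrow> 'a" and xs :: 'a and a \<delta> :: "nat \<Rightarrow> real"
    and p k :: nat
  defines "D \<equiv> Bnorm B (x 0 - xs) + (\<Sum>i=1..k. \<delta> i)"
    and "xbar \<equiv> (1 / (\<Sum>i=1..k. a i)) *\<^sub>R (\<Sum>i=1..k. a i *\<^sub>R x i)"
  assumes conv: "convex_on S Fr" and k: "1 \<le> k" and p: "2 \<le> p" and \<beta>: "0 < \<beta>" and \<epsilon>: "0 < \<epsilon>"
    and Fp0: "Fp 0 \<noteq> 0"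
    and a: "\<And>i. i < k \<Longrightarrow> 0 < a (Suc i) \<and> a (Suc i) ^ p * (2 * Bdnorm B (Fp i)) ^ (p - 1) = \<beta>"
    and Fp: "\<And>i. i < k \<Longrightarrow> Fp (Suc i) = (1 / a (Suc i)) *\<^sub>R (g (Suc i) - B (x (Suc i) - x i))"
    and g: "\<And>i. i < k \<Longrightarrow> Bdnorm B (g (Suc i)) \<le> \<delta> (Suc i)"
    and x: "\<And>i. i < k \<Longrightarrow> x (Suc i) \<in> S"
    and subgrad: "\<And>i. i < k \<Longrightarrow> Fr (x (Suc i)) - Fr xs \<le> Fp (Suc i) \<bullet> (x (Suc i) - xs)"
    and gap: "\<And>i. i < k \<Longrightarrow> \<epsilon> \<le> Fr (x (Suc i)) - Fr xs"
  shows "xbar \<in> S"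
    and "Fr xbar - Fr xs \<le> 2 ^ (p - 2) * D ^ (p + 1)
      * (Bdnorm B (Fp 0) * D / \<epsilon>) powr (real (p - 1) / real k) / (\<beta> * real k powr ((real p + 1) / 2))"
proof -
  have iterates: "0 < a i" "x i \<in> S" if "i \<in> {1..k}" for i
    using forall_Suc_lessD[where P = "\<lambda>i. 0 < a i \<and> x i \<in> S" and k = k, OF _ that] a x by blast+
  then show "xbar \<in> S"
    unfolding xbar_def using k by (intro convex_on_weighted_mean(1)[OF conv]) auto
  have \<phi>: "\<And>i. i < k \<Longrightarrow>
      \<epsilon> \<le> Fr (x (Suc i)) - Fr xs \<and> Fr (x (Suc i)) - Fr xs \<le> Fp (Suc i) \<bullet> (x (Suc i) - xs)"
    using gap subgrad by blast
  have "Fr xbar \<le> (\<Sum>i=1..k. a i * Fr (x i)) / (\<Sum>i=1..k. a i)"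
    unfolding xbar_def using k iterates by (intro convex_on_weighted_mean(2)[OF conv]) auto
  moreover have "(\<Sum>i=1..k. a i * Fr (x i)) / (\<Sum>i=1..k. a i) - Fr xs
      = (\<Sum>i=1..k. a i * (Fr (x i) - Fr xs)) / (\<Sum>i=1..k. a i)"
    using k iterates sum_pos[of "{1..k}" a]
    by (simp add: right_diff_distrib sum_subtractf diff_divide_distrib flip: sum_distrib_right)
  moreover note inexact_prox_weighted_gap_bound[where \<phi> = "\<lambda>i. Fr (x i) - Fr xs" and \<delta> = \<delta>,
      OF k p \<beta> \<epsilon> Fp0 a Fp g \<phi>, folded D_def]
  ultimately show "Fr xbar - Fr xs \<le> 2 ^ (p - 2) * D ^ (p + 1)
      * (Bdnorm B (Fp 0) * D / \<epsilon>) powr (real (p - 1) / real k) / (\<beta> * real k powr ((real p + 1) / 2))"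
    by linarith
qed

end

theorem lemma3:
  fixes B :: "'a::euclidean_space \<Rightarrow> 'a"
    and f :: "'a \<Rightarrow> real" and h :: "'a \<Rightarrow> ereal"
    and U :: "'a set" and Df :: "nat \<Rightarrow> 'a \<Rightarrow> 'a list \<Rightarrow> real"
    and p :: nat and L :: real
    and xs :: 'a
    and x :: "nat \<Rightarrow> 'a" and Fp :: "nat \<Rightarrow> 'a" and g :: "nat \<Rightarrow> 'a"
    and a :: "nat \<Rightarrow> real" and \<delta> :: "nat \<Rightarrow> real"
    and \<epsilon> :: real and K :: nat
  defines "F \<equiv> (\<lambda>y. ereal (f y) + h y)"
  assumes B: "selfadj_posdef B"
    and p: "p \<ge> 2"
    and h: "proper_closed_convex h"
    and U: "open U" "convex U" "edom h \<subseteq> U"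
    and fconv: "convex_on U f"
    and fdiff: "has_derivs_upto p f Df U"
    and Lpos: "0 < L"
    and Lip: "\<forall>y\<in>edom h. \<forall>z\<in>edom h. \<forall>u. Bnorm B u \<le> 1 \<longrightarrow>
               \<bar>Df p y (replicate p u) - Df p z (replicate p u)\<bar> \<le> L * Bnorm B (y - z)"
    and xs: "xs \<in> edom h" "\<forall>y. F xs \<le> F y"
    and x0: "x 0 \<in> edom h" "Fp 0 \<in> subdiff F (x 0)"
    and \<delta>: "\<forall>k\<ge>1. \<delta> k \<ge> 0"
    and step_a: "\<forall>k<K. a (Suc k) =
        (1 / (2 * Bdnorm B (Fp k))) powr (real (p - 1) / real p)
        * (fact p / ((real p + 1) * L)) powr (1 / real p)"
    and step_g: "\<forall>k<K. g (Suc k) \<in> subdiff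
        (\<lambda>y. ereal (a (Suc k)) * F y + ereal (Bnorm B (y - x k) ^ 2 / 2)) (x (Suc k))"
    and step_\<delta>: "\<forall>k<K. Bdnorm B (g (Suc k)) \<le> \<delta> (Suc k)"
    and step_F: "\<forall>k<K. Fp (Suc k) = (1 / a (Suc k)) *\<^sub>R (g (Suc k) - B (x (Suc k) - x k))"
    and nonzero: "\<forall>i<K. Fp i \<noteq> 0"
    and eps: "\<epsilon> > 0" and K: "K \<ge> 1"
    and gap: "\<forall>k. 1 \<le> k \<and> k \<le> K \<longrightarrow> F (x k) - F xs \<ge> ereal \<epsilon>"
  shows "\<forall>k. 1 \<le> k \<and> k \<le> K \<longrightarrow>
     (let D = Bnorm B (x 0 - xs) + (\<Sum>i=1..k. \<delta> i);
          V = (Bdnorm B (Fp 0) * D / \<epsilon>) powr (real (p - 1) / real k);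
          xbar = (1 / (\<Sum>i=1..k. a i)) *\<^sub>R (\<Sum>i=1..k. a i *\<^sub>R x i)
      in F xbar - F xs \<le>
         ereal (L * D ^ (p + 1) / real k powr ((real p + 1) / 2)
                * ((real p + 1) * 2 ^ (p - 2) * V / fact p)))"
proof (intro allI impI)
  (* The smoothness hypotheses fdiff and Lip, the optimality of xs and the hypotheses
     on x 0 are not needed for this bound. *)
  fix k assume k: "1 \<le> k \<and> k \<le> K"
  interpret posdef_operator B
    by (rule posdef_operator.intro[OF B])
  define Fr where "Fr y = f y + real_of_ereal (h y)" for y
  define \<beta> where "\<beta> = fact p / ((real p + 1) * L)"
  note F = ereal_add_proper_closed_convex[OF h fconv U(3), folded Fr_def]
  have step: "0 < a (Suc i) \<and> a (Suc i) ^ p * (2 * Bdnorm B (Fp i)) ^ (p - 1) = \<beta>"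
    "Fp (Suc i) = (1 / a (Suc i)) *\<^sub>R (g (Suc i) - B (x (Suc i) - x i))"
    "Bdnorm B (g (Suc i)) \<le> \<delta> (Suc i)" if "i < k" for i
    using step_a step_F step_\<delta> that k nonzero Bdnorm_pos[of "Fp i"] Lpos p
      step_size_power[of "2 * Bdnorm B (Fp i)" \<beta> p] by (auto simp: \<beta>_def)
  have iter: "x (Suc i) \<in> edom h" "Fr (x (Suc i)) - Fr xs \<le> Fp (Suc i) \<bullet> (x (Suc i) - xs)"
    if "i < k" for i
    using prox_step_subgradient[OF F(1) xs(1), of F "a (Suc i)" "g (Suc i)" "x i" "x (Suc i)"]
      F(2,3) step[OF that] step_g that k by (auto simp: F_def inner_diff_right)
  have gap_real: "\<epsilon> \<le> Fr (x (Suc i)) - Fr xs" if "i < k" for i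
    using gap[rule_format, of "Suc i"] that k iter(1)[OF that] F(2) xs(1) by (simp add: F_def)
  have "Fp 0 \<noteq> 0"
    using nonzero K by simp
  note rate = inexact_prox_rate[OF F(1) conjunct1[OF k] p _ eps this step iter gap_real]
  have "2 ^ (p - 2) * D ^ (p + 1) * V / (\<beta> * real k powr ((real p + 1) / 2))
      = L * D ^ (p + 1) / real k powr ((real p + 1) / 2) * ((real p + 1) * 2 ^ (p - 2) * V / fact p)"
    for D V
    using Lpos k by (simp add: \<beta>_def field_simps)
  then show "let D = Bnorm B (x 0 - xs) + (\<Sum>i=1..k. \<delta> i);
          V = (Bdnorm B (Fp 0) * D / \<epsilon>) powr (real (p - 1) / real k);
          xbar = (1 / (\<Sum>i=1..k. a i)) *\<^sub>R (\<Sum>i=1..k. a i *\<^sub>R x i)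
      in F xbar - F xs \<le>
         ereal (L * D ^ (p + 1) / real k powr ((real p + 1) / 2)
                * ((real p + 1) * 2 ^ (p - 2) * V / fact p))"
    using rate Lpos k by (simp add: Let_def F_def F(2) xs(1) \<beta>_def)
qed

end
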